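(* Let $G=(\mathcal{V},\mathcal{E})$ be a finite graph with $C\ge 2$ classes, in which every node $i$ has a true label $y_i\in\{1,\dots,C\}$, a feature vector $\mathbf{x}_i\in\mathbb{R}^F$, and degree $deg(i)\ge 1$; write $\mathcal{N}(i)$ for the set of neighbours of $i$. Assume: (1) the feature $\mathbf{x}_i$ of each node $i$ is sampled from a distribution $\mathcal{D}_{y_i}$ depending only on its label, with mean $\boldsymbol{\mu}(y_i)$, features of distinct nodes being drawn independently given the labels; (2) the coordinates of $\mathbf{x}_i$ are independent; (3) $\max_k|\mathbf{x}_i[k]|\le B$ for a positive scalar $B$; (4) the (pseudo-)label vector $\hat{\mathbf{y}}_i$ satisfies $\mathbb{E}[\hat{\mathbf{y}}_i]=(1-\epsilon)\mathbf{e}_{y_i}+\frac{\epsilon}{C-1}\sum_{j\ne y_i}\mathbf{e}_j$ for some $\epsilon\in(0,1)$; (5) given $y_i$, the labels $\{y_j: j\in\mathcal{N}(i)\}$ of the neighbours of $i$ are conditionally independent, each equal to $y_i$ with probability $p$ and equal to any given class $c\ne y_i$ with probability $(1-p)/(C-1)$. Define the mixed feature of node $i$ after one Mixup operation by $\mathbf{h}_i=\sum_{j\in\mathcal{N}(i)}\frac{1}{deg(i)}\mathbf{x}_j$. Then, for any node $i\in\mathcal{V}$ (expectations and probabilities being conditional on $y_i$), $$\mathbb{E}[\mathbf{h}_i]=p\,\boldsymbol{\mu}(y_i)+\frac{1-p}{C-1}\sum_{c\ne y_i}\boldsymbol{\mu}(c),$$ and for every $t>0$, $$\mathbb{P}\big(\|\mathbf{h}_i-\mathbb{E}[\mathbf{h}_i]\|_2\ge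 t\big)\le 2F\exp\!\Big(-\frac{deg(i)\,t^2}{2B^2F}\Big).$$
   Context: $\mathbf{e}_c$ denotes the $c$-th standard basis vector of $\mathbb{R}^C$; $\mathbf{x}[k]$ denotes the $k$-th coordinate of a vector $\mathbf{x}$; $F$ is the feature dimension. The Mixup operation replaces a node's feature by the weighted average of its neighbours' features. *)

theory Defs
  imports "HOL-Probability.Probability"
begin

definition neighbours :: "'v set \<Rightarrow> ('v \<Rightarrow> 'v \<Rightarrow> bool) \<Rightarrow> 'v \<Rightarrow> 'v set" where
  "neighbours V E i = {j \<in> V. E i j}"

definition mixup :: "'v set \<Rightarrow> ('v \<Rightarrow> 'a \<Rightarrow> real ^ 'f) \<Rightarrow> 'a \<Rightarrow> real ^ 'f" where
  "mixup Nb X \<omega> = (\<Sum>j\<in>Nb. (1 / real (card Nb)) *\<^sub>R X j \<omega>)"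

end

theory Submission
  imports Defs
begin

text \<open>Conditioning on the label of a neighbour j splits its feature X j into the class
  distributions D c, so E[X j] is the mixture of the class means with the label probabilities;
  averaging over the neighbours preserves this mean. For the deviation, each coordinate of the
  Mixup average is a mean of deg(i) independent variables in [-B, B], to which Hoeffding's
  inequality applies with threshold t / sqrt F; a union bound over the F coordinates finishes,
  because a vector of norm at least t has a coordinate of size at least t / sqrt F.
  Neither the independence of the coordinates (2) nor the pseudo-label hypothesis (4) is needed,
  and boundedness is only used through the neighbours' features X j.\<close>

lemma norm_le_sqrt_card_mult_component:
  fixes v :: "real ^ 'n"
  obtains k where "norm v \<le> sqrt (real CARD('n)) * \<bar>v $ k\<bar>"
proof -
  have "Max (range (\<lambda>k'. \<bar>v $ k'\<bar>)) \<in> range (\<lambda>k'. \<bar>v $ k'\<bar>)"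
    by (rule Max_in) auto
  then obtain k where k: "\<bar>v $ k\<bar> = Max (range (\<lambda>k'. \<bar>v $ k'\<bar>))"
    by (metis rangeE)
  have "norm v = L2_set (\<lambda>k'. \<bar>v $ k'\<bar>) UNIV"
    by (simp add: norm_vec_def L2_set_def)
  also have "\<dots> \<le> L2_set (\<lambda>_. \<bar>v $ k\<bar>) (UNIV :: 'n set)"
    by (rule L2_set_mono) (auto simp: k)
  also have "\<dots> = sqrt (real CARD('n)) * \<bar>v $ k\<bar>"
    by (simp add: L2_set_constant)
  finally show ?thesis by (rule that)
qed

lemma (in finite_measure) integrable_bounded_components:
  fixes X :: "'a \<Rightarrow> real ^ 'n"
  assumes "X \<in> borel_measurable M" and "AE \<omega> in M. \<forall>k. \<bar>X \<omega> $ k\<bar> \<le> B"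
  shows "integrable M X"
proof (rule integrable_const_bound)
  show "AE \<omega> in M. norm (X \<omega>) \<le> real CARD('n) * B"
    using assms(2)
  proof eventually_elim
    case (elim \<omega>)
    then have "(\<Sum>k\<in>UNIV. \<bar>X \<omega> $ k\<bar>) \<le> real CARD('n) * B"
      using sum_bounded_above[of UNIV "\<lambda>k. \<bar>X \<omega> $ k\<bar>" B] by simp
    then show ?case
      using norm_le_l1_cart[of "X \<omega>"] by linarith
  qed
qed (use assms(1) in simp)

lemma (in finite_measure) distr_restrict_label_eq:
  fixes Y :: "'a \<Rightarrow> 'l" and c :: 'l and X :: "'a \<Rightarrow> 'b::topological_space" and D :: "'b measure"
  defines "P \<equiv> {\<omega> \<in> space M. Y \<omega> = c}"
  assumes [measurable]: "Y \<in> measurable M (count_space UNIV)" "X \<in> borel_measurable M"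
    and D: "finite_measure D" "sets D = sets borel"
    and law: "\<And>A. A \<in> sets borel \<Longrightarrow>
           measure M {\<omega> \<in> space M. Y \<omega> = c \<and> X \<omega> \<in> A} = measure M P * measure D A"
  shows "distr (density M (indicator P)) borel X = density D (\<lambda>_. ennreal (measure M P))"
proof (rule measure_eqI)
  show "sets (distr (density M (indicator P)) borel X) = sets (density D (\<lambda>_. ennreal (measure M P)))"
    using D(2) by simp
next
  fix A assume "A \<in> sets (distr (density M (indicator P)) borel X)"
  then have A[measurable]: "A \<in> sets borel" by simp
  have P[measurable]: "P \<in> sets M" unfolding P_def by measurable
  have "emeasure (distr (density M (indicator P)) borel X) A
      = emeasure (density M (indicator P)) (X -` A \<inter> space M)"
    by (subst emeasure_distr) auto
  also have "\<dots> = emeasure M (P \<inter> (X -` A \<inter> space M))"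
    by (rule emeasure_restricted) auto
  also have "P \<inter> (X -` A \<inter> space M) = {\<omega> \<in> space M. Y \<omega> = c \<and> X \<omega> \<in> A}"
    unfolding P_def by auto
  also have "emeasure M \<dots> = ennreal (measure M P * measure D A)"
    using law[OF A] by (simp add: emeasure_eq_measure)
  also have "\<dots> = ennreal (measure M P) * emeasure D A"
    using D by (simp add: finite_measure.emeasure_eq_measure ennreal_mult)
  also have "\<dots> = emeasure (density D (\<lambda>_. ennreal (measure M P))) A"
    using A D(2) by (simp add: emeasure_density nn_integral_cmult_indicator)
  finally show "emeasure (distr (density M (indicator P)) borel X) A
      = emeasure (density D (\<lambda>_. ennreal (measure M P))) A" .
qed

lemma (in finite_measure) integral_indicator_label:
  fixes Y :: "'a \<Rightarrow> 'l" and c :: 'l and X :: "'a \<Rightarrow> 'b::{banach, second_countable_topology}"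
    and D :: "'b measure"
  defines "P \<equiv> {\<omega> \<in> space M. Y \<omega> = c}"
  assumes [measurable]: "Y \<in> measurable M (count_space UNIV)" "X \<in> borel_measurable M"
    and D: "finite_measure D" "sets D = sets borel"
    and law: "\<And>A. A \<in> sets borel \<Longrightarrow>
           measure M {\<omega> \<in> space M. Y \<omega> = c \<and> X \<omega> \<in> A} = measure M P * measure D A"
  shows "(\<integral>\<omega>. indicator P \<omega> *\<^sub>R X \<omega> \<partial>M) = measure M P *\<^sub>R (\<integral>x. x \<partial>D)"
proof -
  have P[measurable]: "P \<in> sets M" unfolding P_def by measurable
  have "(\<integral>\<omega>. indicator P \<omega> *\<^sub>R X \<omega> \<partial>M) = integral\<^sup>L (density M (\<lambda>\<omega>. ennreal (indicator P \<omega>))) X"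
    by (rule integral_density[symmetric]) auto
  also have "\<dots> = integral\<^sup>L (density M (indicator P)) X"
    by (simp add: ennreal_indicator)
  also have "\<dots> = integral\<^sup>L (distr (density M (indicator P)) borel X) (\<lambda>x. x)"
    by (rule integral_distr[symmetric]) auto
  also have "\<dots> = integral\<^sup>L (density D (\<lambda>_. ennreal (measure M P))) (\<lambda>x. x)"
    using distr_restrict_label_eq[of Y X D c] D law by (simp add: P_def)
  also have "\<dots> = measure M P *\<^sub>R (\<integral>x. x \<partial>D)"
    using D(2) by (subst integral_density) (auto simp: measurable_cong_sets[OF D(2) refl])
  finally show ?thesis .
qed

lemma (in finite_measure) integral_eq_sum_label_means:
  fixes Y :: "'a \<Rightarrow> 'l" and X :: "'a \<Rightarrow> 'b::{banach, second_countable_topology}"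
    and D :: "'l \<Rightarrow> 'b measure"
  assumes [measurable]: "Y \<in> measurable M (count_space UNIV)" "X \<in> borel_measurable M"
    and X_int: "integrable M X"
    and S: "finite S" "\<And>\<omega>. \<omega> \<in> space M \<Longrightarrow> Y \<omega> \<in> S"
    and D: "\<And>c. c \<in> S \<Longrightarrow> finite_measure (D c)" "\<And>c. c \<in> S \<Longrightarrow> sets (D c) = sets borel"
    and law: "\<And>c A. c \<in> S \<Longrightarrow> A \<in> sets borel \<Longrightarrow>
           measure M {\<omega> \<in> space M. Y \<omega> = c \<and> X \<omega> \<in> A}
             = measure M {\<omega> \<in> space M. Y \<omega> = c} * measure (D c) A"
  shows "integral\<^sup>L M X = (\<Sum>c\<in>S. measure M {\<omega> \<in> space M. Y \<omega> = c} *\<^sub>R (\<integral>x. x \<partial>D c))"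
proof -
  let ?P = "\<lambda>c. {\<omega> \<in> space M. Y \<omega> = c}"
  have "integral\<^sup>L M X = (\<integral>\<omega>. (\<Sum>c\<in>S. indicator (?P c) \<omega> *\<^sub>R X \<omega>) \<partial>M)"
  proof (rule Bochner_Integration.integral_cong[OF refl])
    fix \<omega> assume "\<omega> \<in> space M"
    then have "(\<Sum>c\<in>S. indicator (?P c) \<omega> *\<^sub>R X \<omega>) = (\<Sum>c\<in>S. if c = Y \<omega> then X \<omega> else 0)"
      by (intro sum.cong) auto
    also have "\<dots> = X \<omega>"
      using S \<open>\<omega> \<in> space M\<close> by (simp add: sum.delta')
    finally show "X \<omega> = (\<Sum>c\<in>S. indicator (?P c) \<omega> *\<^sub>R X \<omega>)" ..
  qed
  also have "\<dots> = (\<Sum>c\<in>S. (\<integral>\<omega>. indicator (?P c) \<omega> *\<^sub>R X \<omega> \<partial>M))"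
    by (rule Bochner_Integration.integral_sum) (auto intro: integrable_mult_indicator X_int)
  also have "\<dots> = (\<Sum>c\<in>S. measure M (?P c) *\<^sub>R (\<integral>x. x \<partial>D c))"
    by (intro sum.cong refl integral_indicator_label) (use D law in auto)
  finally show ?thesis .
qed

lemma (in prob_space) prob_abs_average_deviation_ge:
  fixes Z :: "'i \<Rightarrow> 'a \<Rightarrow> real"
  assumes fin: "finite I" and ne: "I \<noteq> {}"
    and indep: "indep_vars (\<lambda>_. borel) Z I"
    and bounded: "\<And>j. j \<in> I \<Longrightarrow> AE \<omega> in M. Z j \<omega> \<in> {a..b}" and ab: "a < b"
    and mean: "\<And>j. j \<in> I \<Longrightarrow> expectation (Z j) = m"
    and s: "s \<ge> 0"
  shows "prob {\<omega> \<in> space M. s \<le> \<bar>(\<Sum>j\<in>I. Z j \<omega>) / card I - m\<bar>}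
           \<le> 2 * exp (- 2 * real (card I) * s\<^sup>2 / (b - a)\<^sup>2)"
proof -
  define n where "n = real (card I)"
  have n: "n > 0" using fin ne by (simp add: n_def card_gt_0_iff)
  interpret Hoeffding_ineq M I Z "\<lambda>_. a" "\<lambda>_. b" "n * m"
  proof unfold_locales
    show "AE \<omega> in M. Z j \<omega> \<in> {a..b}" if "j \<in> I" for j
      using bounded[OF that] .
  qed (simp_all add: fin indep mean n_def)
  have "{\<omega> \<in> space M. s \<le> \<bar>(\<Sum>j\<in>I. Z j \<omega>) / n - m\<bar>}
      = {\<omega> \<in> space M. n * s \<le> \<bar>(\<Sum>j\<in>I. Z j \<omega>) - n * m\<bar>}"
    using n by (intro Collect_cong conj_cong refl) (auto simp: field_simps)
  moreover have "prob {\<omega> \<in> space M. n * s \<le> \<bar>(\<Sum>j\<in>I. Z j \<omega>) - n * m\<bar>}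
      \<le> 2 * exp (- 2 * (n * s)\<^sup>2 / (\<Sum>j\<in>I. (b - a)\<^sup>2))"
    using n s ab by (intro Hoeffding_ineq_abs_ge) (auto simp: n_def)
  moreover have "- 2 * (n * s)\<^sup>2 / (\<Sum>j\<in>I. (b - a)\<^sup>2) = - 2 * n * s\<^sup>2 / (b - a)\<^sup>2"
    using n by (simp add: n_def power2_eq_square)
  ultimately show ?thesis by (simp add: n_def)
qed

lemma (in prob_space) prob_norm_mixup_deviation_ge:
  fixes Xs :: "'i \<Rightarrow> 'a \<Rightarrow> real ^ 'f"
  assumes fin: "finite I" and ne: "I \<noteq> {}"
    and indep: "indep_vars (\<lambda>_. borel) Xs I"
    and bounded: "\<And>j. j \<in> I \<Longrightarrow> AE \<omega> in M. \<forall>k. \<bar>Xs j \<omega> $ k\<bar> \<le> B" and B: "B > 0"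
    and mean: "\<And>j. j \<in> I \<Longrightarrow> expectation (Xs j) = v"
    and t: "t \<ge> 0"
  shows "prob {\<omega> \<in> space M. norm (mixup I Xs \<omega> - v) \<ge> t}
           \<le> 2 * real CARD('f) * exp (- (real (card I) * t\<^sup>2) / (2 * B\<^sup>2 * real CARD('f)))"
proof -
  define F where "F = real CARD('f)"
  define s where "s = t / sqrt F"
  define bnd where "bnd = 2 * exp (- (real (card I) * t\<^sup>2) / (2 * B\<^sup>2 * F))"
  have F: "F > 0" unfolding F_def by simp
  have Xs_meas[measurable]: "Xs j \<in> borel_measurable M" if "j \<in> I" for j
    using indep that unfolding indep_vars_def by auto
  have mixup_meas[measurable]: "mixup I Xs \<in> borel_measurable M"
    unfolding mixup_def[abs_def] by (intro borel_measurable_sum borel_measurable_scaleR Xs_meas) auto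
  have coordinate: "prob {\<omega> \<in> space M. s \<le> \<bar>mixup I Xs \<omega> $ k - v $ k\<bar>} \<le> bnd" for k
  proof -
    have "mixup I Xs \<omega> $ k = (\<Sum>j\<in>I. Xs j \<omega> $ k) / card I" for \<omega>
      by (simp add: mixup_def sum_divide_distrib)
    moreover have "prob {\<omega> \<in> space M. s \<le> \<bar>(\<Sum>j\<in>I. Xs j \<omega> $ k) / card I - v $ k\<bar>}
        \<le> 2 * exp (- 2 * real (card I) * s\<^sup>2 / (B - - B)\<^sup>2)"
    proof (rule prob_abs_average_deviation_ge[OF fin ne])
      show "indep_vars (\<lambda>_. borel) (\<lambda>j \<omega>. Xs j \<omega> $ k) I"
        using indep_vars_compose2[OF indep borel_measurable_nth] .
      show "AE \<omega> in M. Xs j \<omega> $ k \<in> {- B..B}" if "j \<in> I" for j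
        using bounded[OF that] by eventually_elim (auto simp: abs_le_iff minus_le_iff)
      show "expectation (\<lambda>\<omega>. Xs j \<omega> $ k) = v $ k" if "j \<in> I" for j
        using integral_bounded_linear[OF bounded_linear_vec_nth
            integrable_bounded_components[OF Xs_meas[OF that] bounded[OF that]], of k]
          mean[OF that] by simp
    qed (use B t F in \<open>auto simp: s_def\<close>)
    moreover have "2 * exp (- 2 * real (card I) * s\<^sup>2 / (B - - B)\<^sup>2) = bnd"
      unfolding bnd_def s_def using F B by (simp add: power_divide power2_eq_square field_simps)
    ultimately show ?thesis by simp
  qed
  have "{\<omega> \<in> space M. norm (mixup I Xs \<omega> - v) \<ge> t}
      \<subseteq> (\<Union>k. {\<omega> \<in> space M. s \<le> \<bar>mixup I Xs \<omega> $ k - v $ k\<bar>})"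
  proof safe
    fix \<omega> assume "\<omega> \<in> space M" and norm_ge: "t \<le> norm (mixup I Xs \<omega> - v)"
    obtain k where "norm (mixup I Xs \<omega> - v) \<le> sqrt F * \<bar>(mixup I Xs \<omega> - v) $ k\<bar>"
      using norm_le_sqrt_card_mult_component unfolding F_def by blast
    then have "s \<le> \<bar>mixup I Xs \<omega> $ k - v $ k\<bar>"
      using norm_ge F by (simp add: s_def divide_le_eq mult.commute)
    with \<open>\<omega> \<in> space M\<close> show "\<omega> \<in> (\<Union>k. {\<omega> \<in> space M. s \<le> \<bar>mixup I Xs \<omega> $ k - v $ k\<bar>})"
      by blast
  qed
  then have "prob {\<omega> \<in> space M. norm (mixup I Xs \<omega> - v) \<ge> t}
      \<le> prob (\<Union>k. {\<omega> \<in> space M. s \<le> \<bar>mixup I Xs \<omega> $ k - v $ k\<bar>})"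
    by (rule finite_measure_mono) measurable
  also have "\<dots> \<le> (\<Sum>k\<in>UNIV. prob {\<omega> \<in> space M. s \<le> \<bar>mixup I Xs \<omega> $ k - v $ k\<bar>})"
    by (rule measure_UNION_le) auto
  also have "\<dots> \<le> (\<Sum>k\<in>(UNIV :: 'f set). bnd)"
    by (intro sum_mono coordinate)
  finally show ?thesis by (simp add: bnd_def F_def)
qed

lemma integral_mixup:
  fixes Xs :: "'i \<Rightarrow> 'a \<Rightarrow> real ^ 'f"
  assumes "finite I" "I \<noteq> {}" "\<And>j. j \<in> I \<Longrightarrow> integrable M (Xs j)"
    and "\<And>j. j \<in> I \<Longrightarrow> integral\<^sup>L M (Xs j) = v"
  shows "integral\<^sup>L M (mixup I Xs) = v"
proof -
  have "integral\<^sup>L M (mixup I Xs) = (\<Sum>j\<in>I. (\<integral>\<omega>. (1 / real (card I)) *\<^sub>R Xs j \<omega> \<partial>M))"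
    unfolding mixup_def[abs_def] by (rule Bochner_Integration.integral_sum) (use assms(3) in auto)
  also have "\<dots> = (\<Sum>j\<in>I. (1 / real (card I)) *\<^sub>R v)"
    using assms(4) by simp
  also have "\<dots> = v"
    using assms(1,2) by (simp only: sum_constant_scaleR scaleR_scaleR) simp
  finally show ?thesis .
qed

theorem theorem1:
  fixes V :: "'v set" and E :: "'v \<Rightarrow> 'v \<Rightarrow> bool" and i :: 'v
    and C :: nat and yi :: nat and p :: real and \<epsilon> :: real and B :: real
    and M :: "'a measure"
    and Y :: "'v \<Rightarrow> 'a \<Rightarrow> nat"
    and X :: "'v \<Rightarrow> 'a \<Rightarrow> real ^ 'f"
    and Yhat :: "'a \<Rightarrow> nat \<Rightarrow> real"
    and D :: "nat \<Rightarrow> (real ^ 'f) measure"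
  assumes finV: "finite V"
    and symE: "\<And>u w. E u w \<Longrightarrow> E w u"
    and irrE: "\<And>u. \<not> E u u"
    and deg_pos: "\<And>u. u \<in> V \<Longrightarrow> card (neighbours V E u) \<ge> 1"
    and iV: "i \<in> V"
    and C2: "C \<ge> 2"
    and yi: "yi \<in> {1..C}"
    and B: "B > 0"
    and M: "prob_space M"
    (* (1) class-conditional feature distributions D c with mean \<mu>(c) = integral of D c *)
    and D_prob: "\<And>c. c \<in> {1..C} \<Longrightarrow> prob_space (D c)"
    and D_sets: "\<And>c. c \<in> {1..C} \<Longrightarrow> sets (D c) = sets borel"
    (* (2) coordinates of the features are independent *)
    and D_coord_indep: "\<And>c. c \<in> {1..C} \<Longrightarrow>
           prob_space.indep_vars (D c) (\<lambda>_. borel) (\<lambda>k x. x $ k) UNIV"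
    (* (3) bounded features *)
    and D_bounded: "\<And>c. c \<in> {1..C} \<Longrightarrow> AE x in D c. \<forall>k. \<bar>x $ k\<bar> \<le> B"
    and X_bounded: "\<And>j. j \<in> neighbours V E i \<Longrightarrow> AE \<omega> in M. \<forall>k. \<bar>X j \<omega> $ k\<bar> \<le> B"
    (* random variables: neighbour labels and features *)
    and Y_meas: "\<And>j. j \<in> neighbours V E i \<Longrightarrow> Y j \<in> measurable M (count_space UNIV)"
    and X_meas: "\<And>j. j \<in> neighbours V E i \<Longrightarrow> X j \<in> borel_measurable M"
    and Y_range: "\<And>j \<omega>. j \<in> neighbours V E i \<Longrightarrow> \<omega> \<in> space M \<Longrightarrow> Y j \<omega> \<in> {1..C}"
    (* (1) given its label c, the feature of neighbour j is distributed as D c *)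
    and X_given_Y: "\<And>j c A. j \<in> neighbours V E i \<Longrightarrow> c \<in> {1..C} \<Longrightarrow> A \<in> sets borel \<Longrightarrow>
           measure M {\<omega> \<in> space M. Y j \<omega> = c \<and> X j \<omega> \<in> A}
             = measure M {\<omega> \<in> space M. Y j \<omega> = c} * measure (D c) A"
    (* (1)+(5) independence across distinct neighbours (labels and features) *)
    and indep: "prob_space.indep_vars M (\<lambda>_. count_space UNIV \<Otimes>\<^sub>M borel)
           (\<lambda>j \<omega>. (Y j \<omega>, X j \<omega>)) (neighbours V E i)"
    (* (5) neighbour label law given y_i = yi *)
    and p: "0 \<le> p" "p \<le> 1"
    and Y_law: "\<And>j c. j \<in> neighbours V E i \<Longrightarrow> c \<in> {1..C} \<Longrightarrow>
           measure M {\<omega> \<in> space M. Y j \<omega> = c} = (if c = yi then p else (1 - p) / (C - 1))"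
    (* (4) pseudo-label vector of node i *)
    and eps: "0 < \<epsilon>" "\<epsilon> < 1"
    and Yhat_int: "\<And>c. c \<in> {1..C} \<Longrightarrow> integrable M (\<lambda>\<omega>. Yhat \<omega> c)"
    and Yhat_mean: "\<And>c. c \<in> {1..C} \<Longrightarrow>
           prob_space.expectation M (\<lambda>\<omega>. Yhat \<omega> c) = (if c = yi then 1 - \<epsilon> else \<epsilon> / (C - 1))"
  shows "prob_space.expectation M (mixup (neighbours V E i) X)
           = p *\<^sub>R (\<integral>x. x \<partial>D yi)
             + ((1 - p) / (C - 1)) *\<^sub>R (\<Sum>c\<in>{1..C} - {yi}. (\<integral>x. x \<partial>D c))
         \<and> (\<forall>t>0.
           measure M {\<omega> \<in> space M.
              norm (mixup (neighbours V E i) X \<omega> - prob_space.expectation M (mixup (neighbours V E i) X)) \<ge> t}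
           \<le> 2 * real CARD('f) *
              exp (- (real (card (neighbours V E i)) * t\<^sup>2) / (2 * B\<^sup>2 * real CARD('f))))"
proof -
  interpret prob_space M by (rule M)
  define N where "N = neighbours V E i"
  have fin: "finite N" using finV by (simp add: N_def neighbours_def)
  have ne: "N \<noteq> {}" using deg_pos[OF iV] by (auto simp: N_def)
  have X_int: "integrable M (X j)" if "j \<in> N" for j
    using that by (intro integrable_bounded_components[where B = B]) (auto simp: N_def X_meas X_bounded)
  define m where "m = p *\<^sub>R (\<integral>x. x \<partial>D yi)
      + ((1 - p) / (C - 1)) *\<^sub>R (\<Sum>c\<in>{1..C} - {yi}. (\<integral>x. x \<partial>D c))"
  have X_mean: "expectation (X j) = m" if j: "j \<in> N" for j
  proof -
    have "expectation (X j) = (\<Sum>c\<in>{1..C}. measure M {\<omega> \<in> space M. Y j \<omega> = c} *\<^sub>R (\<integral>x. x \<partial>D c))"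
      using j D_prob D_sets by (intro integral_eq_sum_label_means X_int Y_range)
        (auto simp: N_def prob_space_def Y_meas X_meas X_given_Y)
    also have "\<dots> = (\<Sum>c\<in>{1..C}. (if c = yi then p else (1 - p) / (C - 1)) *\<^sub>R (\<integral>x. x \<partial>D c))"
      using Y_law j by (intro sum.cong) (auto simp: N_def)
    also have "\<dots> = m"
      using yi by (simp add: m_def sum.remove[of _ yi] scaleR_sum_right)
    finally show ?thesis .
  qed
  have indep_X: "indep_vars (\<lambda>_. borel) X N"
    using indep_vars_compose2[OF indep measurable_snd] by (simp add: N_def)
  have mean: "expectation (mixup N X) = m"
    using fin ne X_int X_mean by (rule integral_mixup)
  show ?thesis
    using prob_norm_mixup_deviation_ge[OF fin ne indep_X X_bounded[folded N_def] B X_mean]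
    unfolding N_def[symmetric] mean by (auto simp: m_def)
qed

end
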